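(* Let $G$ be a graph of order $n$ with $\alpha(G)=2$. Then $m_G[0,n-2]=2$ if and only if $G \cong K_1 \nabla K_{n-m} \nabla K_{m-1}$ for some integer $m$ with $2\le m\le n$; equivalently, $G\cong (K_1\cup K_{m-1})\nabla K_{n-m}$ (where $K_0$ denotes the empty graph).
   Context: All graphs are finite and simple. The Laplacian matrix of $G$ is $L(G)=D(G)-A(G)$ ($D(G)$ the diagonal degree matrix, $A(G)$ the adjacency matrix); its eigenvalues with multiplicity are the Laplacian eigenvalues. For an interval $I$, $m_G I$ is the number of Laplacian eigenvalues of $G$ (with multiplicity) in $I$. $\alpha(G)$ is the independence number. $K_k$ is the complete graph on $k$ vertices, $G_1\cup G_2$ is disjoint union. For pairwise disjoint graphs $G_1,\dots,G_k$, $G_1\nabla G_2\nabla\cdots\nabla G_k$ is the graph obtained from $G_1\cup\cdots\cup G_k$ by adding all edges $xy$ with $x\in V(G_i)$, $y\in V(G_{i+1})$ for $i=1,\dots,k-1$; in particular $G_1\nabla G_2$ is the join. *)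

theory Defs
  imports "Jordan_Normal_Form.Char_Poly"
begin

(* A finite simple graph of order n: vertex set {0..<n}, adjacency relation E
   (only its restriction to {0..<n} matters), symmetric and irreflexive. *)
definition simple_graph :: "nat \<Rightarrow> (nat \<Rightarrow> nat \<Rightarrow> bool) \<Rightarrow> bool" where
  "simple_graph n E \<longleftrightarrow>
     (\<forall>i<n. \<not> E i i) \<and> (\<forall>i<n. \<forall>j<n. E i j \<longrightarrow> E j i)"

definition independent_set :: "nat \<Rightarrow> (nat \<Rightarrow> nat \<Rightarrow> bool) \<Rightarrow> nat set \<Rightarrow> bool" where
  "independent_set n E S \<longleftrightarrow> S \<subseteq> {0..<n} \<and> (\<forall>u\<in>S. \<forall>v\<in>S. \<not> E u v)"

definition independence_number :: "nat \<Rightarrow> (nat \<Rightarrow> nat \<Rightarrow> bool) \<Rightarrow> nat" where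
  "independence_number n E = Max (card ` {S. independent_set n E S})"

definition laplacian :: "nat \<Rightarrow> (nat \<Rightarrow> nat \<Rightarrow> bool) \<Rightarrow> real mat" where
  "laplacian n E = mat n n (\<lambda>(i,j).
     (if i = j then real (card {k. k < n \<and> E i k}) else 0) - (if E i j then 1 else 0))"

(* m_G I: number of Laplacian eigenvalues (with multiplicity) in I;
   the multiplicity of an eigenvalue is its multiplicity as a root of the
   characteristic polynomial *)
definition lap_count :: "nat \<Rightarrow> (nat \<Rightarrow> nat \<Rightarrow> bool) \<Rightarrow> real set \<Rightarrow> nat" where
  "lap_count n E I =
     (\<Sum>x\<in>{x\<in>I. poly (char_poly (laplacian n E)) x = 0}. order x (char_poly (laplacian n E)))"

definition block_of :: "nat list \<Rightarrow> nat \<Rightarrow> nat" where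
  "block_of ks v = (LEAST i. v < sum_list (take (Suc i) ks))"

(* K_{k_1} \<nabla> K_{k_2} \<nabla> ... \<nabla> K_{k_r} on vertex set {0..<sum_list ks}:
   consecutive blocks of sizes k_1,...,k_r (blocks may be empty = K_0);
   distinct vertices adjacent iff in the same or in consecutive blocks. *)
definition clique_chain :: "nat list \<Rightarrow> nat \<Rightarrow> nat \<Rightarrow> bool" where
  "clique_chain ks u v \<longleftrightarrow> u \<noteq> v \<and>
     (block_of ks u = block_of ks v \<or> block_of ks u = Suc (block_of ks v)
      \<or> block_of ks v = Suc (block_of ks u))"

definition graph_iso :: "nat \<Rightarrow> (nat \<Rightarrow> nat \<Rightarrow> bool) \<Rightarrow> (nat \<Rightarrow> nat \<Rightarrow> bool) \<Rightarrow> bool" where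
  "graph_iso n E H \<longleftrightarrow> (\<exists>f. bij_betw f {0..<n} {0..<n} \<and>
     (\<forall>i<n. \<forall>j<n. E i j \<longleftrightarrow> H (f i) (f j)))"

end

theory Submission
  imports Defs "Jordan_Normal_Form.Schur_Decomposition"
    "HOL-Computational_Algebra.Fundamental_Theorem_Algebra"
begin

text \<open>
  The quadratic form of the Laplacian is \<open>x\<^sup>T L x = \<Sum>\<^bsub>ij \<in> E\<^esub> (x\<^sub>i - x\<^sub>j)\<^sup>2\<close>, and
  \<open>L(G) + L(G\<^sup>c) = n I - J\<close>. By the Courant--Fischer principle, a \<open>k\<close>-dimensional space
  on which the Rayleigh quotient is at most \<open>n - 2\<close> yields \<open>k\<close> eigenvalues in \<open>[0, n - 2]\<close>,
  and one on which it exceeds \<open>n - 2\<close> yields \<open>k\<close> eigenvalues above \<open>n - 2\<close>.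
  The constant vector together with the vectors \<open>e\<^sub>a - e\<^sub>b\<close> for pairwise disjoint non-edges
  \<open>ab\<close> spans a space of the first kind; if all non-edges pass through one vertex \<open>v\<close>, the
  vectors orthogonal to the constant vector and vanishing at \<open>v\<close> form an \<open>(n - 2)\<close>-dimensional
  space of the second kind. Hence \<open>m\<^sub>G[0, n - 2] = 2\<close> forces any two non-edges to meet, and
  as \<open>\<alpha>(G) = 2\<close> excludes triangles of non-edges, they then all pass through a common vertex
  \<open>v\<close>. Conversely, such a star of non-edges gives \<open>m\<^sub>G[0, n - 2] = 2\<close>. These graphs are
  precisely \<open>K\<^sub>1 \<nabla> K\<^sub>n\<^sub>-\<^sub>m \<nabla> K\<^sub>m\<^sub>-\<^sub>1\<close>: \<open>v\<close> is the \<open>K\<^sub>1\<close> and its non-neighbours form the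
  \<open>K\<^sub>m\<^sub>-\<^sub>1\<close>.
\<close>

section \<open>The spectral theorem for real symmetric matrices\<close>

definition symmetric_mat :: "'a mat \<Rightarrow> bool" where
  "symmetric_mat A \<longleftrightarrow> transpose_mat A = A"

lemma symmetric_matD:
  assumes "A \<in> carrier_mat n n" "symmetric_mat A" "i < n" "j < n"
  shows "A $$ (i, j) = A $$ (j, i)"
  using assms unfolding symmetric_mat_def by (metis carrier_matD index_transpose_mat(1))

lemma cnj_hermitian_form_real_symmetric:
  fixes A :: "real mat" and v :: "complex vec"
  assumes "A \<in> carrier_mat n n" "symmetric_mat A"
  shows "cnj (\<Sum>i<n. \<Sum>j<n. cnj (v$i) * of_real (A$$(i,j)) * v$j)
       = (\<Sum>i<n. \<Sum>j<n. cnj (v$i) * of_real (A$$(i,j)) * v$j)"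
proof -
  have "cnj (\<Sum>i<n. \<Sum>j<n. cnj (v$i) * of_real (A$$(i,j)) * v$j)
      = (\<Sum>j<n. \<Sum>i<n. v$i * of_real (A$$(i,j)) * cnj (v$j))"
    by (simp add: sum.swap[where A = "{..<n}" and B = "{..<n}" and
        g = "\<lambda>i j. v$i * of_real (A$$(i,j)) * cnj (v$j)"])
  also have "\<dots> = (\<Sum>i<n. \<Sum>j<n. cnj (v$i) * of_real (A$$(i,j)) * v$j)"
    using symmetric_matD[OF assms] by (auto intro!: sum.cong simp: mult.commute mult.left_commute)
  finally show ?thesis .
qed

lemma real_symmetric_mat_has_eigenvalue:
  fixes A :: "real mat"
  assumes A: "A \<in> carrier_mat n n" and "n > 0" and sym: "symmetric_mat A"
  shows "\<exists>e. eigenvalue A e"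
proof -
  let ?Ac = "map_mat complex_of_real A"
  have Ac: "?Ac \<in> carrier_mat n n" using A by simp
  have "degree (char_poly A) = n" using degree_monic_char_poly[OF A] by auto
  then have "\<not> constant (poly (map_poly complex_of_real (char_poly A)))"
    using \<open>n > 0\<close> by (simp add: constant_degree)
  then obtain z where z: "poly (map_poly complex_of_real (char_poly A)) z = 0"
    using fundamental_theorem_of_algebra by blast
  then have "poly (char_poly ?Ac) z = 0" by (simp add: of_real_hom.char_poly_hom[OF A])
  then have "eigenvalue ?Ac z" using eigenvalue_root_char_poly[OF Ac] by simp
  then obtain v where v: "v \<in> carrier_vec n" "v \<noteq> 0\<^sub>v n" and Av: "?Ac *\<^sub>v v = z \<cdot>\<^sub>v v"
    unfolding eigenvalue_def eigenvector_def using A by auto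
  define s where "s = (\<Sum>i<n. \<Sum>j<n. cnj (v$i) * of_real (A$$(i,j)) * v$j)"
  define r where "r = (\<Sum>i<n. (cmod (v$i))^2)"
  \<comment> \<open>the Rayleigh quotient \<open>z = s / r\<close> is real because \<open>s\<close> is\<close>
  have "s = (\<Sum>i<n. cnj (v$i) * (?Ac *\<^sub>v v) $ i)"
    unfolding s_def using A v
    by (auto intro!: sum.cong simp: scalar_prod_def lessThan_atLeast0 sum_distrib_left mult.assoc)
  also have "\<dots> = z * (\<Sum>i<n. cnj (v$i) * v$i)"
    unfolding Av using v by (auto simp: sum_distrib_left intro!: sum.cong)
  also have "(\<Sum>i<n. cnj (v$i) * v$i) = of_real r"
    unfolding r_def of_real_sum by (intro sum.cong refl) (metis complex_norm_square mult.commute)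
  finally have sr: "s = z * of_real r" .
  obtain i where "i < n" "v $ i \<noteq> 0"
    using v by (metis eq_vecI carrier_vecD index_zero_vec)
  then have "r > 0" unfolding r_def by (intro sum_pos2[of _ i]) auto
  then have "z = s / of_real r" using sr by simp
  then have "cnj z = z"
    using cnj_hermitian_form_real_symmetric[OF A sym] unfolding s_def by simp
  then have zre: "z = of_real (Re z)" by (simp add: complex_eq_iff)
  have "complex_of_real (poly (char_poly A) (Re z))
      = poly (map_poly complex_of_real (char_poly A)) (of_real (Re z))"
    by (rule of_real_hom.poly_map_poly[symmetric])
  then have "poly (char_poly A) (Re z) = 0" using z zre by simp
  then show ?thesis using eigenvalue_root_char_poly[OF A] by auto
qed

lemma orthonormal_completion:
  fixes u :: "real vec"
  assumes u: "u \<in> carrier_vec n" and uu: "u \<bullet> u = 1"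
  shows "\<exists>W \<in> carrier_mat n n. transpose_mat W * W = 1\<^sub>m n \<and> col W 0 = u"
proof -
  interpret cof_vec_space n "TYPE(real)" .
  have u0: "u \<noteq> 0\<^sub>v n" using uu u by auto
  then have "n > 0" using u by (auto intro!: eq_vecI)
  define b where "b = basis_completion u"
  from basis_completion[OF u u0, folded b_def]
  have "distinct b" "\<not> lin_dep (set b)" "set b \<subseteq> carrier_vec n" "hd b = u" "length b = n"
    by auto
  then obtain bs where b: "b = u # bs" using \<open>n > 0\<close> by (cases b) auto
  define ws where "ws = gram_schmidt n b"
  from gram_schmidt_result[OF \<open>set b \<subseteq> _\<close> \<open>distinct b\<close> \<open>\<not> lin_dep _\<close> refl, folded ws_def]
  have wsC: "set ws \<subseteq> carrier_vec n" and orth: "corthogonal ws" and len_ws: "length ws = n"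
    using \<open>length b = n\<close> by auto
  have "hd ws = u" using gram_schmidt_hd[OF u, of bs] unfolding ws_def b .
  then have ws0: "ws ! 0 = u" using len_ws \<open>n > 0\<close> by (cases ws) auto
  have wsi: "\<And>i. i < n \<Longrightarrow> ws ! i \<in> carrier_vec n" using wsC len_ws by auto
  have ws_orth: "\<And>i j. i < n \<Longrightarrow> j < n \<Longrightarrow> ws!i \<bullet> ws!j = 0 \<longleftrightarrow> i \<noteq> j"
    using corthogonalD[OF orth] len_ws by simp
  have ws_pos: "\<And>i. i < n \<Longrightarrow> ws!i \<bullet> ws!i > 0"
    using ws_orth wsi by (metis conjugate_square_ge_0_vec vec_conjugate_real order_le_less)
  define ns where "ns = map (\<lambda>w. (1 / sqrt (w \<bullet> w)) \<cdot>\<^sub>v w) ws"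
  have nsi: "\<And>i. i < n \<Longrightarrow> ns ! i \<in> carrier_vec n" unfolding ns_def using wsi len_ws by simp
  have ns_orth: "ns!i \<bullet> ns!j = (if i = j then 1 else 0)" if "i < n" "j < n" for i j
  proof -
    have "ns!i \<bullet> ns!j = 1 / sqrt (ws!i \<bullet> ws!i) * (1 / sqrt (ws!j \<bullet> ws!j)) * (ws!i \<bullet> ws!j)"
      unfolding ns_def using that len_ws wsi[OF that(1)] wsi[OF that(2)] by simp
    then show ?thesis using ws_orth[OF that] ws_pos[OF that(1)] ws_pos[OF that(2)]
      by (auto simp: real_sqrt_mult[symmetric])
  qed
  define W where "W = mat_of_cols n ns"
  have W: "W \<in> carrier_mat n n"
    unfolding W_def using len_ws by (metis length_map mat_of_cols_carrier(1) ns_def)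
  have colW: "\<And>i. i < n \<Longrightarrow> col W i = ns ! i"
    unfolding W_def ns_def using len_ws nsi[unfolded ns_def] by simp
  have "transpose_mat W * W = 1\<^sub>m n"
    by (rule eq_matI) (use W in \<open>auto simp: colW ns_orth\<close>)
  moreover have "col W 0 = u"
    using colW[of 0] ws0 uu len_ws u0 u by (cases n) (auto simp: ns_def)
  ultimately show ?thesis using W by blast
qed

definition orthogonal_diagonalization :: "nat \<Rightarrow> real mat \<Rightarrow> real mat \<Rightarrow> (nat \<Rightarrow> real) \<Rightarrow> bool" where
  "orthogonal_diagonalization n A Q d \<longleftrightarrow>
     Q \<in> carrier_mat n n \<and> transpose_mat Q * Q = 1\<^sub>m n \<and> transpose_mat Q * A * Q = mat_diag n d"

lemma symmetric_mat_congruence: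
  fixes A W :: "'a :: comm_ring_1 mat"
  assumes "A \<in> carrier_mat n n" "W \<in> carrier_mat n m" "symmetric_mat A"
  shows "symmetric_mat (transpose_mat W * A * W)"
proof -
  have WA: "transpose_mat W * A \<in> carrier_mat m n" using assms by simp
  have "transpose_mat (transpose_mat W * A * W)
      = transpose_mat W * transpose_mat (transpose_mat W * A)"
    by (rule transpose_mult[OF WA assms(2)])
  also have "transpose_mat (transpose_mat W * A) = A * W"
    using assms transpose_mult[of "transpose_mat W" m n A n] by (simp add: symmetric_mat_def)
  finally show ?thesis
    unfolding symmetric_mat_def using assms by (simp add: assoc_mult_mat[of _ m n _ n _ m])
qed

lemma congruence_eigenvector_column:
  fixes A W :: "real mat"
  assumes A: "A \<in> carrier_mat n n" and W: "W \<in> carrier_mat n n"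
    and WW: "transpose_mat W * W = 1\<^sub>m n" and "0 < n" and Au: "A *\<^sub>v col W 0 = e \<cdot>\<^sub>v col W 0"
    and i: "i < n"
  shows "(transpose_mat W * A * W) $$ (i, 0) = (if i = 0 then e else 0)"
proof -
  have "transpose_mat W * A * W = transpose_mat W * (A * W)"
    using A W by (simp add: assoc_mult_mat[of _ n n _ n _ n])
  then have "(transpose_mat W * A * W) $$ (i, 0) = row (transpose_mat W) i \<bullet> col (A * W) 0"
    using A W i \<open>0 < n\<close> by (simp only: index_mult_mat(1)) auto
  also have "\<dots> = col W i \<bullet> (A *\<^sub>v col W 0)"
    using A W i \<open>0 < n\<close> by (simp only: row_transpose col_mult2) auto
  also have "\<dots> = e * (col W i \<bullet> col W 0)" using Au W i by simp
  also have "col W i \<bullet> col W 0 = (transpose_mat W * W) $$ (i, 0)" using W i \<open>0 < n\<close> by simp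
  finally show ?thesis using WW i \<open>0 < n\<close> by simp
qed

lemma orthogonal_diagonalization_block:
  assumes Q: "orthogonal_diagonalization k B Q d" and B: "B \<in> carrier_mat k k"
  shows "orthogonal_diagonalization (Suc k)
    (four_block_mat (mat 1 1 (\<lambda>_. e)) (0\<^sub>m 1 k) (0\<^sub>m k 1) B)
    (four_block_mat (1\<^sub>m 1) (0\<^sub>m 1 k) (0\<^sub>m k 1) Q) (case_nat e d)"
proof -
  from Q have QC: "Q \<in> carrier_mat k k" and QQ: "transpose_mat Q * Q = 1\<^sub>m k"
    and QBQ: "transpose_mat Q * B * Q = mat_diag k d"
    unfolding orthogonal_diagonalization_def by auto
  have Qt: "transpose_mat Q \<in> carrier_mat k k" using QC by simp
  have tr: "transpose_mat (four_block_mat (1\<^sub>m 1) (0\<^sub>m 1 k) (0\<^sub>m k 1) Q)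
      = four_block_mat (1\<^sub>m 1) (0\<^sub>m 1 k) (0\<^sub>m k 1) (transpose_mat Q)"
    using transpose_four_block_mat[OF one_carrier_mat zero_carrier_mat zero_carrier_mat QC] by simp
  have "transpose_mat (four_block_mat (1\<^sub>m 1) (0\<^sub>m 1 k) (0\<^sub>m k 1) Q)
      * four_block_mat (1\<^sub>m 1) (0\<^sub>m 1 k) (0\<^sub>m k 1) Q = 1\<^sub>m (Suc k)"
    unfolding tr using QC QQ
    by (subst mult_four_block_mat[OF one_carrier_mat zero_carrier_mat zero_carrier_mat Qt
          one_carrier_mat zero_carrier_mat zero_carrier_mat QC]) simp
  moreover have "transpose_mat (four_block_mat (1\<^sub>m 1) (0\<^sub>m 1 k) (0\<^sub>m k 1) Q)
      * four_block_mat (mat 1 1 (\<lambda>_. e)) (0\<^sub>m 1 k) (0\<^sub>m k 1) B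
      * four_block_mat (1\<^sub>m 1) (0\<^sub>m 1 k) (0\<^sub>m k 1) Q = mat_diag (Suc k) (case_nat e d)"
    unfolding tr
    apply (subst mult_four_block_mat[OF one_carrier_mat zero_carrier_mat zero_carrier_mat Qt
          _ zero_carrier_mat zero_carrier_mat B], simp)
    apply (subst mult_four_block_mat[OF _ _ _ _
          one_carrier_mat zero_carrier_mat zero_carrier_mat QC])
    using QC B by (auto simp: QBQ intro!: eq_matI) (auto simp: mat_diag_def split: nat.split)
  ultimately show ?thesis
    unfolding orthogonal_diagonalization_def using QC by auto
qed

lemma orthogonal_diagonalization_congruence:
  assumes A: "A \<in> carrier_mat n n" and W: "W \<in> carrier_mat n n"
    and WW: "transpose_mat W * W = 1\<^sub>m n"
    and Q: "orthogonal_diagonalization n (transpose_mat W * A * W) Q d"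
  shows "orthogonal_diagonalization n A (W * Q) d"
proof -
  from Q have QC: "Q \<in> carrier_mat n n" and QQ: "transpose_mat Q * Q = 1\<^sub>m n"
    and D: "transpose_mat Q * (transpose_mat W * A * W) * Q = mat_diag n d"
    unfolding orthogonal_diagonalization_def by auto
  have tr: "transpose_mat (W * Q) = transpose_mat Q * transpose_mat W"
    using W QC by (rule transpose_mult)
  have "transpose_mat (W * Q) * (W * Q) = transpose_mat Q * (transpose_mat W * W) * Q"
    unfolding tr using W QC by (simp add: assoc_mult_mat[of _ n n _ n _ n])
  moreover have "transpose_mat (W * Q) * A * (W * Q)
      = transpose_mat Q * (transpose_mat W * A * W) * Q"
    unfolding tr using W QC A by (simp add: assoc_mult_mat[of _ n n _ n _ n])
  ultimately show ?thesis
    unfolding orthogonal_diagonalization_def using W QC QQ WW D by simp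
qed

theorem real_symmetric_orthogonal_diagonalization:
  fixes A :: "real mat"
  assumes "A \<in> carrier_mat n n" "symmetric_mat A"
  shows "\<exists>Q d. orthogonal_diagonalization n A Q d"
  using assms
proof (induction n arbitrary: A)
  case 0
  then show ?case
    by (auto simp: orthogonal_diagonalization_def mat_diag_def intro!: exI[of _ "1\<^sub>m 0"] eq_matI)
next
  case (Suc k)
  have A: "A \<in> carrier_mat (Suc k) (Suc k)" by fact
  obtain e where e: "eigenvalue A e"
    using real_symmetric_mat_has_eigenvalue[OF A] Suc.prems by auto
  then obtain v where v: "v \<in> carrier_vec (Suc k)" "v \<noteq> 0\<^sub>v (Suc k)" "A *\<^sub>v v = e \<cdot>\<^sub>v v"
    unfolding eigenvalue_def eigenvector_def using A by auto
  have "v \<bullet> v > 0" using conjugate_square_greater_0_vec[OF v(1)] v(2) by simp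
  define u where "u = (1 / sqrt (v \<bullet> v)) \<cdot>\<^sub>v v"
  have u: "u \<in> carrier_vec (Suc k)" "u \<bullet> u = 1" "A *\<^sub>v u = e \<cdot>\<^sub>v u"
    unfolding u_def using v \<open>v \<bullet> v > 0\<close> mult_mat_vec[OF A v(1)]
    by (auto simp: real_sqrt_mult[symmetric] smult_smult_assoc mult.commute)
  obtain W where W: "W \<in> carrier_mat (Suc k) (Suc k)" and WW: "transpose_mat W * W = 1\<^sub>m (Suc k)"
    and Wu: "col W 0 = u"
    using orthonormal_completion[OF u(1,2)] by blast
  define A' where "A' = transpose_mat W * A * W"
  have A'C: "A' \<in> carrier_mat (Suc k) (Suc k)" unfolding A'_def using W A by auto
  have A'sym: "symmetric_mat A'"
    unfolding A'_def using symmetric_mat_congruence[OF A W] Suc.prems by blast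
  have A'0: "\<And>i. i < Suc k \<Longrightarrow> A' $$ (i, 0) = (if i = 0 then e else 0)"
    unfolding A'_def using congruence_eigenvector_column[OF A W WW] u(3) Wu by simp
  define B where "B = mat k k (\<lambda>(i, j). A' $$ (Suc i, Suc j))"
  have B: "B \<in> carrier_mat k k" unfolding B_def by simp
  have "symmetric_mat B"
    using symmetric_matD[OF A'C A'sym] unfolding B_def symmetric_mat_def by (auto intro!: eq_matI)
  then obtain Q d where Q: "orthogonal_diagonalization k B Q d" using Suc.IH[OF B] by blast
  have "A' = four_block_mat (mat 1 1 (\<lambda>_. e)) (0\<^sub>m 1 k) (0\<^sub>m k 1) B"
    using A'C A'0 symmetric_matD[OF A'C A'sym] by (auto simp: B_def intro!: eq_matI)
  then have "orthogonal_diagonalization (Suc k) A'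
      (four_block_mat (1\<^sub>m 1) (0\<^sub>m 1 k) (0\<^sub>m k 1) Q) (case_nat e d)"
    using orthogonal_diagonalization_block[OF Q B] by simp
  then show ?case
    using orthogonal_diagonalization_congruence[OF A W WW] unfolding A'_def by blast
qed

section \<open>Counting eigenvalues\<close>

lemma orthogonal_diagonalization_decomposition:
  assumes A: "A \<in> carrier_mat n n" and QD: "orthogonal_diagonalization n A Q d"
  shows "Q * transpose_mat Q = 1\<^sub>m n" and "A = Q * mat_diag n d * transpose_mat Q"
proof -
  from QD have Q: "Q \<in> carrier_mat n n" and QQ: "transpose_mat Q * Q = 1\<^sub>m n"
    and D: "transpose_mat Q * A * Q = mat_diag n d"
    unfolding orthogonal_diagonalization_def by auto
  have Qt: "transpose_mat Q \<in> carrier_mat n n" using Q by simp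
  show QQt: "Q * transpose_mat Q = 1\<^sub>m n" by (rule mat_mult_left_right_inverse[OF Qt Q QQ])
  have "Q * mat_diag n d * transpose_mat Q = (Q * transpose_mat Q) * A * (Q * transpose_mat Q)"
    unfolding D[symmetric] using Q Qt A by (simp add: assoc_mult_mat[of _ n n _ n _ n])
  then show "A = Q * mat_diag n d * transpose_mat Q" using QQt A by simp
qed

lemma char_poly_orthogonal_diagonalization:
  assumes A: "A \<in> carrier_mat n n" and QD: "orthogonal_diagonalization n A Q d"
  shows "char_poly A = (\<Prod>a \<leftarrow> map d [0..<n]. [:-a, 1:])"
proof -
  have Q: "Q \<in> carrier_mat n n" using QD unfolding orthogonal_diagonalization_def by auto
  have "similar_mat A (mat_diag n d)"
    using orthogonal_diagonalization_decomposition[OF A QD] QD A Q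
    unfolding orthogonal_diagonalization_def by (intro similar_matI[where n = n]) auto
  then have "char_poly A = char_poly (mat_diag n d)" by (rule char_poly_similar)
  also have "\<dots> = (\<Prod>a \<leftarrow> diag_mat (mat_diag n d). [:-a, 1:])"
    by (rule char_poly_upper_triangular[of _ n]) (auto simp: mat_diag_def)
  also have "diag_mat (mat_diag n d) = map d [0..<n]"
    unfolding diag_mat_def mat_diag_def by (rule nth_equalityI) auto
  finally show ?thesis .
qed

lemma order_prod_linear_factors:
  fixes x :: "'a :: idom"
  shows "Polynomial.order x (\<Prod>a \<leftarrow> as. [:-a, 1:]) = length (filter ((=) x) as)"
proof (induction as)
  case (Cons a as)
  have "(\<Prod>a \<leftarrow> a # as. [:-a, 1:]) \<noteq> 0" by (simp only: prod_list_zero_iff) auto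
  then have "Polynomial.order x ([:-a, 1:] * (\<Prod>a \<leftarrow> as. [:-a, 1:]))
      = Polynomial.order x [:-a, 1:] + Polynomial.order x (\<Prod>a \<leftarrow> as. [:-a, 1:])"
    by (intro order_mult) simp
  moreover have "Polynomial.order x [:-a, 1:] = (if x = a then 1 else 0)"
    using order_power_n_n[of a 1] order_root[of "[:-a, 1:]" x] by auto
  ultimately show ?case using Cons.IH by simp
qed simp

lemma sum_order_prod_linear_factors:
  fixes as :: "'a :: idom list"
  shows "(\<Sum>x \<in> {x \<in> I. poly (\<Prod>a \<leftarrow> as. [:-a, 1:]) x = 0}. Polynomial.order x (\<Prod>a \<leftarrow> as. [:-a, 1:]))
    = length (filter (\<lambda>a. a \<in> I) as)"
proof (induction as)
  case (Cons b as)
  let ?p = "\<lambda>as. \<Prod>a \<leftarrow> as. [:-a, 1:]"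
  have roots: "\<And>as. {x \<in> I. poly (?p as) x = 0} = I \<inter> set as"
    by (auto simp: poly_prod_list_zero_iff)
  have "(\<Sum>x \<in> I \<inter> set (b # as). Polynomial.order x (?p (b # as)))
      = (\<Sum>x \<in> I \<inter> set (b # as). (if x = b then 1 else 0) + Polynomial.order x (?p as))"
    by (intro sum.cong refl) (simp only: order_prod_linear_factors, simp)
  also have "\<dots> = (if b \<in> I then 1 else 0)
      + (\<Sum>x \<in> I \<inter> set (b # as). Polynomial.order x (?p as))"
    by (simp add: sum.distrib)
  also have "(\<Sum>x \<in> I \<inter> set (b # as). Polynomial.order x (?p as))
      = (\<Sum>x \<in> I \<inter> set as. Polynomial.order x (?p as))"
    by (rule sum.mono_neutral_right) (auto simp: order_prod_linear_factors filter_empty_conv)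
  finally show ?case using Cons.IH unfolding roots by simp
qed simp

lemma eigenvalue_count_orthogonal_diagonalization:
  assumes "A \<in> carrier_mat n n" and "orthogonal_diagonalization n A Q d"
  shows "(\<Sum>x \<in> {x \<in> I. poly (char_poly A) x = 0}. Polynomial.order x (char_poly A))
    = card {i. i < n \<and> d i \<in> I}"
  unfolding char_poly_orthogonal_diagonalization[OF assms] sum_order_prod_linear_factors
  by (simp add: length_filter_conv_card cong: conj_cong)

lemma mat_diag_mult_vec:
  assumes "z \<in> carrier_vec n" "i < n"
  shows "(mat_diag n d *\<^sub>v z) $ i = d i * z $ i"
proof -
  have "(mat_diag n d *\<^sub>v z) $ i = (\<Sum>j \<in> {0..<n}. (if i = j then d j else 0) * z $ j)"
    using assms by (simp add: mat_diag_def scalar_prod_def)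
  also have "\<dots> = (\<Sum>j \<in> {0..<n}. if j = i then d i * z $ i else 0)"
    by (intro sum.cong) auto
  finally show ?thesis using assms by simp
qed

lemma quadratic_form_orthogonal_diagonalization:
  assumes A: "A \<in> carrier_mat n n" and QD: "orthogonal_diagonalization n A Q d"
    and x: "x \<in> carrier_vec n"
  shows "x \<bullet> (A *\<^sub>v x) = (\<Sum>i<n. d i * ((transpose_mat Q *\<^sub>v x) $ i)\<^sup>2)"
    and "x \<bullet> x = (\<Sum>i<n. ((transpose_mat Q *\<^sub>v x) $ i)\<^sup>2)"
proof -
  define z where "z = transpose_mat Q *\<^sub>v x"
  have Q: "Q \<in> carrier_mat n n" using QD unfolding orthogonal_diagonalization_def by auto
  have z: "z \<in> carrier_vec n" unfolding z_def using Q x by simp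
  have w: "mat_diag n d *\<^sub>v z \<in> carrier_vec n" using mult_mat_vec_carrier[OF mat_diag_dim z] .
  note decomp = orthogonal_diagonalization_decomposition[OF A QD]
  have "A *\<^sub>v x = Q *\<^sub>v (mat_diag n d *\<^sub>v z)"
    unfolding z_def using Q x by (subst decomp(2)) (simp add: assoc_mult_mat_vec[of _ n n _ n])
  then have "x \<bullet> (A *\<^sub>v x) = z \<bullet> (mat_diag n d *\<^sub>v z)"
    using transpose_vec_mult_scalar[OF Q w x] unfolding z_def by simp
  also have "\<dots> = (\<Sum>i<n. z $ i * (mat_diag n d *\<^sub>v z) $ i)"
    unfolding scalar_prod_def carrier_vecD[OF w] by (simp add: lessThan_atLeast0)
  also have "\<dots> = (\<Sum>i<n. d i * (z $ i)\<^sup>2)"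
    by (intro sum.cong refl) (simp add: mat_diag_mult_vec[OF z] power2_eq_square)
  finally show "x \<bullet> (A *\<^sub>v x) = (\<Sum>i<n. d i * ((transpose_mat Q *\<^sub>v x) $ i)\<^sup>2)"
    unfolding z_def .
  have "x = Q *\<^sub>v z"
    unfolding z_def using Q x decomp(1) by (simp add: assoc_mult_mat_vec[symmetric, of _ n n _ n])
  then have "x \<bullet> x = z \<bullet> z"
    using transpose_vec_mult_scalar[OF Q z x] unfolding z_def by simp
  also have "z \<bullet> z = (\<Sum>i<n. (z $ i)\<^sup>2)"
    unfolding scalar_prod_def carrier_vecD[OF z] by (simp add: lessThan_atLeast0 power2_eq_square)
  finally show "x \<bullet> x = (\<Sum>i<n. ((transpose_mat Q *\<^sub>v x) $ i)\<^sup>2)"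
    unfolding z_def .
qed

definition vec_lincomb :: "nat \<Rightarrow> nat \<Rightarrow> (nat \<Rightarrow> real) \<Rightarrow> (nat \<Rightarrow> nat \<Rightarrow> real) \<Rightarrow> real vec" where
  "vec_lincomb n k c Y = vec n (\<lambda>l. \<Sum>j<k. c j * Y j l)"

definition lin_indep_family :: "nat \<Rightarrow> nat \<Rightarrow> (nat \<Rightarrow> nat \<Rightarrow> real) \<Rightarrow> bool" where
  "lin_indep_family n k Y \<longleftrightarrow> (\<forall>c. vec_lincomb n k c Y = 0\<^sub>v n \<longrightarrow> (\<forall>j<k. c j = 0))"

lemma homogeneous_system_nontrivial_solution:
  fixes M :: "nat \<Rightarrow> nat \<Rightarrow> real"
  assumes S: "finite S" and k: "card S < k"
  shows "\<exists>c. (\<exists>j<k. c j \<noteq> 0) \<and> (\<forall>i\<in>S. (\<Sum>j<k. M i j * c j) = 0)"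
proof -
  obtain h where h: "bij_betw h {0..<card S} S" using ex_bij_betw_nat_finite[OF S] by blast
  define B where "B = mat k k (\<lambda>(r, j). if r < card S then M (h r) j else 0)"
  have B: "B \<in> carrier_mat k k" unfolding B_def by simp
  \<comment> \<open>the last row of \<open>B\<close> vanishes\<close>
  have "B = mat\<^sub>r k k
      (\<lambda>r. if r = k - 1 then 0\<^sub>v k else vec k (\<lambda>j. if r < card S then M (h r) j else 0))"
    unfolding B_def using k by (intro eq_matI) auto
  also have "det \<dots> = 0" using k by (intro det_row_0) auto
  finally obtain v where v: "v \<in> carrier_vec k" "v \<noteq> 0\<^sub>v k" "B *\<^sub>v v = 0\<^sub>v k"
    using det_0_iff_vec_prod_zero_field[OF B] by blast
  obtain j where "j < k" "v $ j \<noteq> 0" using v(1,2) by (metis eq_vecI carrier_vecD index_zero_vec)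
  moreover have "(\<Sum>j<k. M i j * v $ j) = 0" if "i \<in> S" for i
  proof -
    obtain r where r: "r < card S" "i = h r"
      using h \<open>i \<in> S\<close> unfolding bij_betw_def by (metis atLeastLessThan_iff imageE)
    have "(\<Sum>j<k. M i j * v $ j) = (B *\<^sub>v v) $ r"
      using r k v(1) unfolding B_def
      by (auto simp: scalar_prod_def lessThan_atLeast0 intro!: sum.cong)
    also have "\<dots> = 0" using v(3) r k by simp
    finally show ?thesis .
  qed
  ultimately show ?thesis by (intro exI[of _ "\<lambda>j. v $ j"]) auto
qed

lemma lincomb_vanishing_coordinates:
  assumes Q: "Q \<in> carrier_mat n n" and Y: "lin_indep_family n k Y"
    and S: "S \<subseteq> {..<n}" and k: "card S < k"
  shows "\<exists>c. vec_lincomb n k c Y \<noteq> 0\<^sub>v n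
    \<and> (\<forall>i\<in>S. (transpose_mat Q *\<^sub>v vec_lincomb n k c Y) $ i = 0)"
proof -
  have "finite S" using S finite_subset by blast
  then obtain c where c: "\<exists>j<k. c j \<noteq> 0"
    and sol: "\<forall>i\<in>S. (\<Sum>j<k. (\<Sum>l<n. Q $$ (l, i) * Y j l) * c j) = 0"
    using homogeneous_system_nontrivial_solution[OF _ k,
        where M = "\<lambda>i j. \<Sum>l<n. Q $$ (l, i) * Y j l"]
    by blast
  have "(transpose_mat Q *\<^sub>v vec_lincomb n k c Y) $ i = 0" if "i \<in> S" for i
  proof -
    have "(transpose_mat Q *\<^sub>v vec_lincomb n k c Y) $ i = (\<Sum>l<n. Q $$ (l, i) * (\<Sum>j<k. c j * Y j l))"
      using that S Q
      by (auto simp: vec_lincomb_def scalar_prod_def lessThan_atLeast0 intro!: sum.cong)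
    also have "\<dots> = (\<Sum>j<k. (\<Sum>l<n. Q $$ (l, i) * Y j l) * c j)"
      by (simp add: sum_distrib_left sum_distrib_right sum.swap[of _ "{..<n}"] mult_ac)
    finally show ?thesis using sol that by simp
  qed
  moreover have "vec_lincomb n k c Y \<noteq> 0\<^sub>v n" using Y c unfolding lin_indep_family_def by blast
  ultimately show ?thesis by blast
qed

lemma card_eigenvalues_le_ge:
  assumes A: "A \<in> carrier_mat n n" and QD: "orthogonal_diagonalization n A Q d"
    and Y: "lin_indep_family n k Y"
    and bound: "\<And>c. vec_lincomb n k c Y \<bullet> (A *\<^sub>v vec_lincomb n k c Y)
                       \<le> t * (vec_lincomb n k c Y \<bullet> vec_lincomb n k c Y)"
  shows "k \<le> card {i. i < n \<and> d i \<le> t}"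
proof (rule ccontr)
  let ?S = "{i. i < n \<and> d i \<le> t}"
  assume "\<not> ?thesis"
  then obtain c where x0: "vec_lincomb n k c Y \<noteq> 0\<^sub>v n"
    and zS: "\<forall>i\<in>?S. (transpose_mat Q *\<^sub>v vec_lincomb n k c Y) $ i = 0"
    using lincomb_vanishing_coordinates[OF _ Y, of Q ?S] QD
    unfolding orthogonal_diagonalization_def by auto
  define x where "x = vec_lincomb n k c Y"
  define z where "z = transpose_mat Q *\<^sub>v x"
  have x: "x \<in> carrier_vec n" unfolding x_def vec_lincomb_def by simp
  note quad = quadratic_form_orthogonal_diagonalization[OF A QD x, folded z_def]
  have "x \<bullet> x > 0" using conjugate_square_greater_0_vec[OF x] x0 unfolding x_def by simp
  then obtain i where i: "i < n" "(z $ i)\<^sup>2 \<noteq> 0" unfolding quad(2)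
    by (metis less_irrefl sum.neutral lessThan_iff)
  have "i \<notin> ?S" using zS i unfolding z_def x_def by auto
  have "(\<Sum>i<n. (d i - t) * (z $ i)\<^sup>2) > 0"
  proof (rule sum_pos2[of _ i])
    show "(d i - t) * (z $ i)\<^sup>2 > 0" using \<open>i \<notin> ?S\<close> i by auto
    show "0 \<le> (d j - t) * (z $ j)\<^sup>2" if "j \<in> {..<n}" for j
      using zS that unfolding z_def x_def by (cases "j \<in> ?S") auto
  qed (use i in auto)
  then have "x \<bullet> (A *\<^sub>v x) > t * (x \<bullet> x)"
    unfolding quad by (simp add: algebra_simps sum_subtractf sum_distrib_left)
  then show False using bound[of c] unfolding x_def by simp
qed

lemma card_eigenvalues_gt_ge:
  assumes A: "A \<in> carrier_mat n n" and QD: "orthogonal_diagonalization n A Q d"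
    and Y: "lin_indep_family n k Y"
    and bound: "\<And>c. vec_lincomb n k c Y \<noteq> 0\<^sub>v n \<Longrightarrow>
        t * (vec_lincomb n k c Y \<bullet> vec_lincomb n k c Y)
        < vec_lincomb n k c Y \<bullet> (A *\<^sub>v vec_lincomb n k c Y)"
  shows "k \<le> card {i. i < n \<and> t < d i}"
proof (rule ccontr)
  let ?S = "{i. i < n \<and> t < d i}"
  assume "\<not> ?thesis"
  then obtain c where x0: "vec_lincomb n k c Y \<noteq> 0\<^sub>v n"
    and zS: "\<forall>i\<in>?S. (transpose_mat Q *\<^sub>v vec_lincomb n k c Y) $ i = 0"
    using lincomb_vanishing_coordinates[OF _ Y, of Q ?S] QD
    unfolding orthogonal_diagonalization_def by auto
  define x where "x = vec_lincomb n k c Y"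
  define z where "z = transpose_mat Q *\<^sub>v x"
  have x: "x \<in> carrier_vec n" unfolding x_def vec_lincomb_def by simp
  note quad = quadratic_form_orthogonal_diagonalization[OF A QD x, folded z_def]
  have "(\<Sum>i<n. (d i - t) * (z $ i)\<^sup>2) \<le> 0"
  proof (rule sum_nonpos)
    show "(d j - t) * (z $ j)\<^sup>2 \<le> 0" if "j \<in> {..<n}" for j
      using zS that unfolding z_def x_def by (cases "j \<in> ?S") (auto intro: mult_nonpos_nonneg)
  qed
  then have "x \<bullet> (A *\<^sub>v x) \<le> t * (x \<bullet> x)"
    unfolding quad by (simp add: algebra_simps sum_subtractf sum_distrib_left)
  then show False using bound[OF x0] unfolding x_def by simp
qed

section \<open>Laplacian eigenvalues in \<open>[0, n - 2]\<close>\<close>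

definition edge_energy :: "nat \<Rightarrow> (nat \<Rightarrow> nat \<Rightarrow> bool) \<Rightarrow> real vec \<Rightarrow> real" where
  "edge_energy n E x = (\<Sum>i<n. \<Sum>j<n. if E i j then (x$i - x$j)\<^sup>2 else 0)"

lemma laplacian_carrier: "laplacian n E \<in> carrier_mat n n"
  unfolding laplacian_def by simp

lemma symmetric_laplacian: "simple_graph n E \<Longrightarrow> symmetric_mat (laplacian n E)"
  unfolding symmetric_mat_def laplacian_def simple_graph_def by (intro eq_matI) auto

lemma real_card_neighbours:
  fixes E :: "nat \<Rightarrow> nat \<Rightarrow> bool"
  shows "real (card {k. k < n \<and> E i k}) = (\<Sum>j<n. if E i j then 1 else 0)"
proof -
  have "(\<Sum>j<n. if E i j then 1 else 0) = (\<Sum>j \<in> {j \<in> {..<n}. E i j}. 1 :: real)"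
    by (rule sum.inter_filter[symmetric]) simp
  also have "{j \<in> {..<n}. E i j} = {k. k < n \<and> E i k}" by auto
  finally show ?thesis by simp
qed

lemma laplacian_mult_vec:
  assumes "x \<in> carrier_vec n" "i < n"
  shows "(laplacian n E *\<^sub>v x) $ i = (\<Sum>j<n. if E i j then x$i - x$j else 0)"
proof -
  let ?deg = "real (card {k. k < n \<and> E i k})"
  have "(laplacian n E *\<^sub>v x) $ i
      = (\<Sum>j<n. ((if i = j then ?deg else 0) - (if E i j then 1 else 0)) * x$j)"
    using assms unfolding laplacian_def
    by (auto simp: scalar_prod_def lessThan_atLeast0 intro!: sum.cong)
  also have "\<dots> = (\<Sum>j<n. (if i = j then ?deg * x$j else 0)) - (\<Sum>j<n. if E i j then x$j else 0)"
    by (simp add: left_diff_distrib sum_subtractf if_distrib[of "\<lambda>a. a * _"] cong: if_cong)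
  also have "(\<Sum>j<n. (if i = j then ?deg * x$j else 0)) = (\<Sum>j<n. if E i j then x$i else 0)"
    using assms(2) unfolding real_card_neighbours
    by (simp add: sum_distrib_right if_distrib[of "\<lambda>a. a * _"] cong: if_cong)
  finally show ?thesis
    by (simp add: sum_subtractf[symmetric] if_distrib[of "\<lambda>a. a - _"] cong: if_cong)
qed

lemma laplacian_quadratic_form:
  assumes G: "simple_graph n E" and x: "x \<in> carrier_vec n"
  shows "x \<bullet> (laplacian n E *\<^sub>v x) = edge_energy n E x / 2"
proof -
  have sym: "\<And>i j. i < n \<Longrightarrow> j < n \<Longrightarrow> E i j = E j i" using G unfolding simple_graph_def by blast
  let ?h = "\<lambda>i j. if E i j then x$i * x$i - x$i * x$j else 0"
  have "x \<bullet> (laplacian n E *\<^sub>v x) = (\<Sum>i<n. x$i * (laplacian n E *\<^sub>v x) $ i)"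
    unfolding scalar_prod_def carrier_vecD[OF mult_mat_vec_carrier[OF laplacian_carrier x]]
    by (simp add: lessThan_atLeast0)
  also have "\<dots> = (\<Sum>i<n. \<Sum>j<n. ?h i j)"
    using x by (simp add: laplacian_mult_vec sum_distrib_left right_diff_distrib
        if_distrib[of "\<lambda>a. _ * a"] cong: if_cong)
  finally have L: "x \<bullet> (laplacian n E *\<^sub>v x) = (\<Sum>i<n. \<Sum>j<n. ?h i j)" .
  \<comment> \<open>each edge \<open>{i, j}\<close> appears once as \<open>(i, j)\<close> and once as \<open>(j, i)\<close>\<close>
  have "(\<Sum>i<n. \<Sum>j<n. ?h j i) = (\<Sum>i<n. \<Sum>j<n. ?h i j)"
    by (subst sum.swap) (auto intro!: sum.cong simp: sym)
  moreover have "edge_energy n E x = (\<Sum>i<n. \<Sum>j<n. ?h i j + ?h j i)"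
    unfolding edge_energy_def using sym
    by (intro sum.cong refl) (auto simp: power2_eq_square algebra_simps)
  ultimately show ?thesis unfolding L by (simp add: sum.distrib)
qed

lemma laplacian_orthogonal_diagonalization:
  assumes "simple_graph n E"
  obtains Q d where "orthogonal_diagonalization n (laplacian n E) Q d"
  using real_symmetric_orthogonal_diagonalization[OF laplacian_carrier]
    symmetric_laplacian[OF assms] by blast

lemma laplacian_eigenvalues_nonneg:
  assumes G: "simple_graph n E" and QD: "orthogonal_diagonalization n (laplacian n E) Q d"
    and i: "i < n"
  shows "d i \<ge> 0"
proof -
  from QD have Q: "Q \<in> carrier_mat n n" and QQ: "transpose_mat Q * Q = 1\<^sub>m n"
    unfolding orthogonal_diagonalization_def by auto
  define x where "x = Q *\<^sub>v unit_vec n i"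
  have x: "x \<in> carrier_vec n" unfolding x_def using Q by simp
  have "transpose_mat Q *\<^sub>v x = unit_vec n i"
    unfolding x_def using Q QQ by (simp add: assoc_mult_mat_vec[symmetric, of _ n n _ n])
  then have "x \<bullet> (laplacian n E *\<^sub>v x) = (\<Sum>j<n. d j * (unit_vec n i $ j)\<^sup>2)"
    using quadratic_form_orthogonal_diagonalization(1)[OF laplacian_carrier QD x] by simp
  also have "\<dots> = d i" using i by (simp add: unit_vec_def if_distrib[of "\<lambda>a. _ * a\<^sup>2"] cong: if_cong)
  finally have "d i = edge_energy n E x / 2" using laplacian_quadratic_form[OF G x] by simp
  moreover have "edge_energy n E x \<ge> 0" unfolding edge_energy_def by (intro sum_nonneg) auto
  ultimately show ?thesis by simp
qed

lemma lap_count_orthogonal_diagonalization: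
  assumes G: "simple_graph n E" and QD: "orthogonal_diagonalization n (laplacian n E) Q d"
  shows "lap_count n E {0..real n - 2} = card {i. i < n \<and> d i \<le> real n - 2}"
  unfolding lap_count_def eigenvalue_count_orthogonal_diagonalization[OF laplacian_carrier QD]
  using laplacian_eigenvalues_nonneg[OF G QD] by (intro arg_cong[where f = card]) auto

lemma sum_sq_diff_pairs:
  fixes f :: "nat \<Rightarrow> real"
  shows "(\<Sum>i<n. \<Sum>j<n. (f i - f j)\<^sup>2) = 2 * real n * (\<Sum>i<n. (f i)\<^sup>2) - 2 * (\<Sum>i<n. f i)\<^sup>2"
proof -
  have "(\<Sum>i<n. \<Sum>j<n. (f i - f j)\<^sup>2) = (\<Sum>i<n. \<Sum>j<n. (f i)\<^sup>2 + (f j)\<^sup>2 - 2 * (f i * f j))"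
    by (intro sum.cong refl) (simp add: power2_eq_square algebra_simps)
  also have "\<dots> = (\<Sum>i<n. real n * (f i)\<^sup>2 + (\<Sum>j<n. (f j)\<^sup>2) - 2 * (f i * (\<Sum>j<n. f j)))"
    by (simp add: sum.distrib sum_subtractf sum_distrib_left)
  also have "\<dots> = 2 * real n * (\<Sum>i<n. (f i)\<^sup>2) - 2 * (\<Sum>i<n. f i)\<^sup>2"
    by (simp add: sum.distrib sum_subtractf sum_distrib_left[symmetric] sum_distrib_right[symmetric]
        power2_eq_square algebra_simps)
  finally show ?thesis .
qed

lemma edge_energy_le_non_edges:
  assumes P: "P \<subseteq> {..<n} \<times> {..<n}" and nE: "\<And>i j. (i, j) \<in> P \<Longrightarrow> \<not> E i j"
  shows "edge_energy n E x \<le> (\<Sum>i<n. \<Sum>j<n. (x$i - x$j)\<^sup>2) - (\<Sum>(i, j) \<in> P. (x$i - x$j)\<^sup>2)"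
proof -
  let ?A = "{..<n} \<times> {..<n}"
  have "edge_energy n E x = (\<Sum>(i, j) \<in> ?A. if E i j then (x$i - x$j)\<^sup>2 else 0)"
    unfolding edge_energy_def sum.cartesian_product ..
  also have "\<dots> \<le> (\<Sum>(i, j) \<in> ?A. (x$i - x$j)\<^sup>2 - (if (i, j) \<in> P then (x$i - x$j)\<^sup>2 else 0))"
    by (intro sum_mono) (auto dest: nE)
  also have "\<dots> = (\<Sum>(i, j) \<in> ?A. (x$i - x$j)\<^sup>2) - (\<Sum>(i, j) \<in> P. (x$i - x$j)\<^sup>2)"
    using P by (simp add: case_prod_beta sum_subtractf sum.If_cases Int_absorb1)
  also have "(\<Sum>(i, j) \<in> ?A. (x$i - x$j)\<^sup>2) = (\<Sum>i<n. \<Sum>j<n. (x$i - x$j)\<^sup>2)"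
    unfolding sum.cartesian_product ..
  finally show ?thesis .
qed

text \<open>Writing \<open>x = \<alpha>\<one> + y\<close> with \<open>\<Sum> y = 0\<close>, the identity \<open>L(G) + L(G\<^sup>c) = n I - J\<close> gives
  \<open>x\<^sup>T L(G) x = n |y|\<^sup>2 - y\<^sup>T L(G\<^sup>c) y\<close>; the non-edges in \<open>P\<close>, listed in both
  orientations, bound \<open>y\<^sup>T L(G\<^sup>c) y\<close> from below.\<close>

lemma laplacian_rayleigh_le_of_non_edges:
  fixes x :: "real vec" and y :: "nat \<Rightarrow> real"
  assumes G: "simple_graph n E" and n: "2 \<le> n" and x: "x \<in> carrier_vec n"
    and xy: "\<And>l. l < n \<Longrightarrow> x$l = \<alpha> + y l" and y_sum: "(\<Sum>l<n. y l) = 0"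
    and P: "P \<subseteq> {..<n} \<times> {..<n}" and nE: "\<And>i j. (i, j) \<in> P \<Longrightarrow> \<not> E i j"
    and yP: "4 * (\<Sum>l<n. (y l)\<^sup>2) \<le> (\<Sum>(i, j) \<in> P. (y i - y j)\<^sup>2)"
  shows "x \<bullet> (laplacian n E *\<^sub>v x) \<le> (real n - 2) * (x \<bullet> x)"
proof -
  have xx: "x \<bullet> x = (\<Sum>l<n. (x$l)\<^sup>2)"
    using x by (simp add: scalar_prod_def lessThan_atLeast0 power2_eq_square)
  have s1: "(\<Sum>l<n. x$l) = real n * \<alpha>" using y_sum by (simp add: xy sum.distrib)
  have "(\<Sum>l<n. (x$l)\<^sup>2) = (\<Sum>l<n. \<alpha>\<^sup>2 + 2 * \<alpha> * y l + (y l)\<^sup>2)"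
    by (intro sum.cong refl) (simp add: xy power2_eq_square algebra_simps)
  then have s2: "(\<Sum>l<n. (x$l)\<^sup>2) = real n * \<alpha>\<^sup>2 + (\<Sum>l<n. (y l)\<^sup>2)"
    using y_sum by (simp add: sum.distrib sum_distrib_left[symmetric])
  have sP: "(\<Sum>(i, j) \<in> P. (x$i - x$j)\<^sup>2) = (\<Sum>(i, j) \<in> P. (y i - y j)\<^sup>2)"
    using P by (intro sum.cong refl) (auto simp: xy)
  have "edge_energy n E x \<le> 2 * real n * (\<Sum>l<n. (x$l)\<^sup>2) - 2 * (\<Sum>l<n. x$l)\<^sup>2
      - (\<Sum>(i, j) \<in> P. (y i - y j)\<^sup>2)"
    using edge_energy_le_non_edges[OF P nE, where x = x] sum_sq_diff_pairs[of "\<lambda>l. x$l" n] sP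
    by simp
  also have "\<dots> = 2 * real n * (\<Sum>l<n. (y l)\<^sup>2) - (\<Sum>(i, j) \<in> P. (y i - y j)\<^sup>2)"
    unfolding s1 s2 by (simp add: power2_eq_square algebra_simps)
  finally have "edge_energy n E x \<le> 2 * real n * (\<Sum>l<n. (y l)\<^sup>2) - (\<Sum>(i, j) \<in> P. (y i - y j)\<^sup>2)" .
  moreover have "(real n - 2) * (real n * \<alpha>\<^sup>2) \<ge> 0" using n by simp
  ultimately have "edge_energy n E x / 2 \<le> (real n - 2) * (\<Sum>l<n. (x$l)\<^sup>2)"
    using yP unfolding s2 by (simp add: algebra_simps)
  then show ?thesis using laplacian_quadratic_form[OF G x] xx by simp
qed

text \<open>If every non-edge contains \<open>v\<close>, then for \<open>\<Sum> x = 0\<close> and \<open>x\<^sub>v = 0\<close> the missing edges,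
  all at \<open>v\<close>, lower \<open>x\<^sup>T L x\<close> from \<open>n |x|\<^sup>2\<close> by at most \<open>|x|\<^sup>2\<close>.\<close>

lemma laplacian_rayleigh_gt_of_star:
  fixes x :: "real vec"
  assumes G: "simple_graph n E" and v: "v < n" and x: "x \<in> carrier_vec n"
    and star: "\<And>i j. i < n \<Longrightarrow> j < n \<Longrightarrow> i \<noteq> j \<Longrightarrow> \<not> E i j \<Longrightarrow> i = v \<or> j = v"
    and xv: "x$v = 0" and x_sum: "(\<Sum>l<n. x$l) = 0" and x0: "x \<noteq> 0\<^sub>v n"
  shows "(real n - 2) * (x \<bullet> x) < x \<bullet> (laplacian n E *\<^sub>v x)"
proof -
  have xx: "x \<bullet> x = (\<Sum>l<n. (x$l)\<^sup>2)"
    using x by (simp add: scalar_prod_def lessThan_atLeast0 power2_eq_square)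
  let ?f = "\<lambda>i j. (x$i - x$j)\<^sup>2"
  let ?g = "\<lambda>i j. (if i = v then ?f i j else 0) + (if j = v then ?f i j else 0)"
  have "(\<Sum>i<n. \<Sum>j<n. ?f i j) - (\<Sum>i<n. \<Sum>j<n. ?g i j) \<le> edge_energy n E x"
    unfolding edge_energy_def sum_subtractf[symmetric]
  proof (intro sum_mono)
    fix i j assume "i \<in> {..<n}" "j \<in> {..<n}"
    then show "?f i j - ?g i j \<le> (if E i j then ?f i j else 0)"
      using star[of i j] by (cases "i = j") auto
  qed
  moreover have "(\<Sum>i<n. \<Sum>j<n. ?g i j) = 2 * (\<Sum>l<n. (x$l)\<^sup>2)"
  proof -
    have "(\<Sum>i<n. \<Sum>j<n. if i = v then ?f i j else 0) = (\<Sum>i<n. if i = v then (\<Sum>j<n. ?f i j) else 0)"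
      by (intro sum.cong) auto
    also have "\<dots> = (\<Sum>l<n. (x$l)\<^sup>2)" using v xv by (simp add: power2_eq_square)
    finally show ?thesis using v xv by (simp add: sum.distrib)
  qed
  ultimately have "2 * real n * (\<Sum>l<n. (x$l)\<^sup>2) - 2 * (\<Sum>l<n. (x$l)\<^sup>2) \<le> edge_energy n E x"
    using sum_sq_diff_pairs[of "\<lambda>l. x$l" n] x_sum by simp
  then have "(real n - 1) * (x \<bullet> x) \<le> x \<bullet> (laplacian n E *\<^sub>v x)"
    using laplacian_quadratic_form[OF G x] xx by (simp add: algebra_simps)
  moreover have "x \<bullet> x > 0" using conjugate_square_greater_0_vec[OF x] x0 by simp
  ultimately show ?thesis by (simp add: algebra_simps)
qed

lemma matching_vector_at_ends:
  fixes c :: "nat \<Rightarrow> real" and a b :: "nat \<Rightarrow> nat"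
  assumes inj: "inj_on a {..<k}" "inj_on b {..<k}" and disj: "a ` {..<k} \<inter> b ` {..<k} = {}"
    and j: "j < k"
  defines "y \<equiv> \<lambda>l. \<Sum>i<k. c i * (of_bool (l = a i) - of_bool (l = b i))"
  shows "y (a j) = c j" and "y (b j) = - c j"
proof -
  have "\<And>i. i < k \<Longrightarrow> a j \<noteq> b i" "\<And>i. i < k \<Longrightarrow> b j \<noteq> a i"
    using disj j by auto
  moreover have "\<And>i. i < k \<Longrightarrow> a j = a i \<longleftrightarrow> i = j" "\<And>i. i < k \<Longrightarrow> b j = b i \<longleftrightarrow> i = j"
    using inj j by (auto dest: inj_onD)
  ultimately show "y (a j) = c j" "y (b j) = - c j"
    unfolding y_def using j by (simp_all add: sum.If_cases sum_negf cong: if_cong)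
qed

lemma matching_vector_sums:
  fixes c :: "nat \<Rightarrow> real" and a b :: "nat \<Rightarrow> nat"
  assumes ab: "\<And>j. j < k \<Longrightarrow> a j < n \<and> b j < n"
    and inj: "inj_on a {..<k}" "inj_on b {..<k}" and disj: "a ` {..<k} \<inter> b ` {..<k} = {}"
  defines "y \<equiv> \<lambda>l. \<Sum>i<k. c i * (of_bool (l = a i) - of_bool (l = b i))"
  shows "(\<Sum>l<n. y l) = 0"
    and "(\<Sum>l<n. (y l)\<^sup>2) = 2 * (\<Sum>i<k. (c i)\<^sup>2)"
    and "(\<Sum>(u, v) \<in> (\<lambda>j. (a j, b j)) ` {..<k} \<union> (\<lambda>j. (b j, a j)) ` {..<k}. (y u - y v)\<^sup>2)
           = 8 * (\<Sum>i<k. (c i)\<^sup>2)"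
proof -
  let ?K = "{..<k}"
  have ya: "y (a j) = c j" and yb: "y (b j) = - c j" if "j < k" for j
    using matching_vector_at_ends[OF inj disj that] unfolding y_def by simp_all
  have "(\<Sum>l<n. y l) = (\<Sum>i<k. \<Sum>l<n. c i * (of_bool (l = a i) - of_bool (l = b i)))"
    unfolding y_def by (rule sum.swap)
  also have "\<dots> = 0"
    using ab by (intro sum.neutral)
      (simp add: right_diff_distrib sum_subtractf of_bool_def if_distrib[of "\<lambda>t. _ * t"] cong: if_cong)
  finally show "(\<Sum>l<n. y l) = 0" .
  have "y l = 0" if "l \<notin> a ` ?K \<union> b ` ?K" for l
    unfolding y_def using that by (auto intro!: sum.neutral)
  then have "(\<Sum>l<n. (y l)\<^sup>2) = (\<Sum>l \<in> a ` ?K \<union> b ` ?K. (y l)\<^sup>2)"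
    using ab by (intro sum.mono_neutral_right) auto
  also have "\<dots> = (\<Sum>l \<in> a ` ?K. (y l)\<^sup>2) + (\<Sum>l \<in> b ` ?K. (y l)\<^sup>2)"
    using disj by (intro sum.union_disjoint) auto
  also have "\<dots> = 2 * (\<Sum>i<k. (c i)\<^sup>2)"
    using inj by (simp add: sum.reindex ya yb)
  finally show "(\<Sum>l<n. (y l)\<^sup>2) = 2 * (\<Sum>i<k. (c i)\<^sup>2)" .
  have inj_pairs: "inj_on (\<lambda>j. (a j, b j)) ?K" "inj_on (\<lambda>j. (b j, a j)) ?K"
    using inj by (auto simp: inj_on_def)
  have "(\<lambda>j. (a j, b j)) ` ?K \<inter> (\<lambda>j. (b j, a j)) ` ?K = {}" using disj by auto
  then have "(\<Sum>(u, v) \<in> (\<lambda>j. (a j, b j)) ` ?K \<union> (\<lambda>j. (b j, a j)) ` ?K. (y u - y v)\<^sup>2)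
      = (\<Sum>j<k. (y (a j) - y (b j))\<^sup>2) + (\<Sum>j<k. (y (b j) - y (a j))\<^sup>2)"
    by (simp add: sum.union_disjoint sum.reindex[OF inj_pairs(1)] sum.reindex[OF inj_pairs(2)])
  also have "\<dots> = 8 * (\<Sum>i<k. (c i)\<^sup>2)"
    by (simp add: ya yb power2_eq_square sum_distrib_left algebra_simps)
  finally show "(\<Sum>(u, v) \<in> (\<lambda>j. (a j, b j)) ` ?K \<union> (\<lambda>j. (b j, a j)) ` ?K. (y u - y v)\<^sup>2)
      = 8 * (\<Sum>i<k. (c i)\<^sup>2)" .
qed

lemma card_laplacian_eigenvalues_le_of_matching:
  fixes a b :: "nat \<Rightarrow> nat"
  assumes G: "simple_graph n E" and QD: "orthogonal_diagonalization n (laplacian n E) Q d"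
    and "0 < k" and ab: "\<And>j. j < k \<Longrightarrow> a j < n \<and> b j < n \<and> \<not> E (a j) (b j)"
    and inj: "inj_on a {..<k}" "inj_on b {..<k}" and disj: "a ` {..<k} \<inter> b ` {..<k} = {}"
  shows "Suc k \<le> card {i. i < n \<and> d i \<le> real n - 2}"
proof -
  let ?u = "\<lambda>i l. of_bool (l = a i) - of_bool (l = b i) :: real"
  let ?y = "\<lambda>c l. \<Sum>i<k. c (Suc i) * ?u i l"
  define Y where "Y = case_nat (\<lambda>l. 1) ?u"
  have lc: "vec_lincomb n (Suc k) c Y $ l = c 0 + ?y c l" if "l < n" for c l
    using that unfolding vec_lincomb_def Y_def sum.lessThan_Suc_shift by simp
  note ends = matching_vector_at_ends[OF inj disj, where c = "\<lambda>i. c (Suc i)" for c]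
  have "a 0 \<noteq> b 0" using disj \<open>0 < k\<close> by auto
  moreover have "a 0 < n" "b 0 < n" using ab \<open>0 < k\<close> by auto
  ultimately have "2 \<le> n" by linarith
  show ?thesis
  proof (rule card_eigenvalues_le_ge[OF laplacian_carrier QD, where Y = Y])
    show "lin_indep_family n (Suc k) Y"
      unfolding lin_indep_family_def
    proof (rule allI, rule impI)
      fix c assume "vec_lincomb n (Suc k) c Y = 0\<^sub>v n"
      then have "c 0 + c (Suc j) = 0 \<and> c 0 - c (Suc j) = 0" if "j < k" for j
        using arg_cong[where f = "\<lambda>x. x $ a j"] arg_cong[where f = "\<lambda>x. x $ b j"]
          lc[of "a j" c] lc[of "b j" c] ab[OF that] ends[OF that] by auto
      then have "c 0 = 0" "\<And>j. j < k \<Longrightarrow> c (Suc j) = 0" using \<open>0 < k\<close> by force+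
      then show "\<forall>j<Suc k. c j = 0" by (auto simp: less_Suc_eq_0_disj)
    qed
  next
    fix c
    let ?P = "(\<lambda>j. (a j, b j)) ` {..<k} \<union> (\<lambda>j. (b j, a j)) ` {..<k}"
    note sums = matching_vector_sums[OF _ inj disj, where n = n and c = "\<lambda>i. c (Suc i)"]
    show "vec_lincomb n (Suc k) c Y \<bullet> (laplacian n E *\<^sub>v vec_lincomb n (Suc k) c Y)
        \<le> (real n - 2) * (vec_lincomb n (Suc k) c Y \<bullet> vec_lincomb n (Suc k) c Y)"
    proof (rule laplacian_rayleigh_le_of_non_edges[OF G \<open>2 \<le> n\<close> _ lc, where P = ?P])
      show "vec_lincomb n (Suc k) c Y \<in> carrier_vec n" unfolding vec_lincomb_def by simp
      show "(\<Sum>l<n. ?y c l) = 0" using sums(1) ab by blast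
      show "?P \<subseteq> {..<n} \<times> {..<n}" using ab by auto
      show "\<not> E i j" if "(i, j) \<in> ?P" for i j
        using that ab G unfolding simple_graph_def by blast
      show "4 * (\<Sum>l<n. (?y c l)\<^sup>2) \<le> (\<Sum>(i, j) \<in> ?P. (?y c i - ?y c j)\<^sup>2)"
        using sums(2,3) ab by simp
    qed
  qed
qed

lemma lin_indep_family_unit_differences:
  assumes g: "\<And>j. j < k \<Longrightarrow> g j < n \<and> g j \<noteq> w" and inj: "inj_on g {..<k}"
  shows "lin_indep_family n k (\<lambda>j l. of_bool (l = g j) - of_bool (l = w))"
  unfolding lin_indep_family_def
proof (rule allI, rule impI)
  fix c assume c: "vec_lincomb n k c (\<lambda>j l. of_bool (l = g j) - of_bool (l = w)) = 0\<^sub>v n"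
  have "c i = 0" if i: "i < k" for i
  proof -
    have "vec_lincomb n k c (\<lambda>j l. of_bool (l = g j) - of_bool (l = w)) $ g i
        = (\<Sum>j<k. if j = i then c i else 0)"
      unfolding vec_lincomb_def using g i inj_on_eq_iff[OF inj] by (auto intro!: sum.cong)
    then show ?thesis using c i g[OF i] by simp
  qed
  then show "\<forall>j<k. c j = 0" by blast
qed

lemma card_laplacian_eigenvalues_gt_of_star:
  assumes G: "simple_graph n E" and QD: "orthogonal_diagonalization n (laplacian n E) Q d"
    and v: "v < n" and n: "2 \<le> n"
    and star: "\<And>i j. i < n \<Longrightarrow> j < n \<Longrightarrow> i \<noteq> j \<Longrightarrow> \<not> E i j \<Longrightarrow> i = v \<or> j = v"
  shows "n - 2 \<le> card {i. i < n \<and> real n - 2 < d i}"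
proof -
  \<comment> \<open>the test space of vectors summing to zero and vanishing at \<open>v\<close> is spanned by the
    \<open>e\<^sub>u - e\<^sub>w\<close>, \<open>u \<notin> {v, w}\<close>, for a fixed \<open>w \<noteq> v\<close>\<close>
  define w where "w = (if v = 0 then 1 else 0 :: nat)"
  have w: "w < n" "w \<noteq> v" unfolding w_def using n by auto
  have "card ({0..<n} - {v, w}) = n - 2" using v w by (simp add: card_Diff_subset)
  then obtain g where g: "bij_betw g {..<n - 2} ({0..<n} - {v, w})"
    using ex_bij_betw_nat_finite[of "{0..<n} - {v, w}"] by (auto simp: lessThan_atLeast0)
  have gV: "g j < n \<and> g j \<noteq> v \<and> g j \<noteq> w" if "j < n - 2" for j
    using bij_betwE[OF g] that by auto
  define Y where "Y = (\<lambda>j l. of_bool (l = g j) - of_bool (l = w) :: real)"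
  show ?thesis
  proof (rule card_eigenvalues_gt_ge[OF laplacian_carrier QD, where Y = Y])
    show "lin_indep_family n (n - 2) Y"
      unfolding Y_def using gV bij_betw_imp_inj_on[OF g]
      by (intro lin_indep_family_unit_differences) auto
  next
    fix c
    define x where "x = vec_lincomb n (n - 2) c Y"
    assume "vec_lincomb n (n - 2) c Y \<noteq> 0\<^sub>v n"
    moreover have "x \<in> carrier_vec n" unfolding x_def vec_lincomb_def by simp
    moreover have "x $ v = 0"
    proof -
      have "x $ v = (\<Sum>j<n - 2. c j * Y j v)" unfolding x_def vec_lincomb_def using v by simp
      also have "\<dots> = 0" unfolding Y_def using gV w by (intro sum.neutral) auto
      finally show ?thesis .
    qed
    moreover have "(\<Sum>l<n. x$l) = 0"
    proof -
      have "(\<Sum>l<n. x$l) = (\<Sum>j<n - 2. c j * (\<Sum>l<n. Y j l))"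
        unfolding x_def vec_lincomb_def by (simp add: sum.swap[of _ "{..<n}"] sum_distrib_left)
      also have "\<dots> = 0"
        unfolding Y_def using gV w by (intro sum.neutral) (simp add: sum_subtractf)
      finally show ?thesis .
    qed
    ultimately show "(real n - 2) * (vec_lincomb n (n - 2) c Y \<bullet> vec_lincomb n (n - 2) c Y)
        < vec_lincomb n (n - 2) c Y \<bullet> (laplacian n E *\<^sub>v vec_lincomb n (n - 2) c Y)"
      using laplacian_rayleigh_gt_of_star[OF G v _ star] unfolding x_def by blast
  qed
qed

lemma lap_count_ge_of_matching:
  fixes a b :: "nat \<Rightarrow> nat"
  assumes G: "simple_graph n E" and "0 < k"
    and "\<And>j. j < k \<Longrightarrow> a j < n \<and> b j < n \<and> \<not> E (a j) (b j)"
    and "inj_on a {..<k}" "inj_on b {..<k}" "a ` {..<k} \<inter> b ` {..<k} = {}"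
  shows "Suc k \<le> lap_count n E {0..real n - 2}"
proof -
  obtain Q d where QD: "orthogonal_diagonalization n (laplacian n E) Q d"
    using laplacian_orthogonal_diagonalization[OF G] .
  show ?thesis
    unfolding lap_count_orthogonal_diagonalization[OF G QD]
    using card_laplacian_eigenvalues_le_of_matching[OF G QD assms(2-)] .
qed

lemma lap_count_of_star:
  assumes G: "simple_graph n E" and v: "v < n"
    and star: "\<And>i j. i < n \<Longrightarrow> j < n \<Longrightarrow> i \<noteq> j \<Longrightarrow> \<not> E i j \<Longrightarrow> i = v \<or> j = v"
    and ab: "a < n" "b < n" "a \<noteq> b" "\<not> E a b"
  shows "lap_count n E {0..real n - 2} = 2"
proof -
  obtain Q d where QD: "orthogonal_diagonalization n (laplacian n E) Q d"
    using laplacian_orthogonal_diagonalization[OF G] .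
  have "2 \<le> n" using ab by linarith
  have "Suc 1 \<le> lap_count n E {0..real n - 2}"
    by (rule lap_count_ge_of_matching[OF G, where a = "\<lambda>_. a" and b = "\<lambda>_. b"])
      (use ab in \<open>auto simp: inj_on_def\<close>)
  moreover have "n - 2 \<le> card {i. i < n \<and> \<not> d i \<le> real n - 2}"
    using card_laplacian_eigenvalues_gt_of_star[OF G QD v \<open>2 \<le> n\<close> star] by (simp add: not_le)
  moreover have "card {i. i < n \<and> d i \<le> real n - 2} + card {i. i < n \<and> \<not> d i \<le> real n - 2} = n"
    by (subst card_Un_disjoint[symmetric])
      (auto intro: arg_cong[where f = card, of _ "{..<n}", simplified])
  ultimately show ?thesis
    unfolding lap_count_orthogonal_diagonalization[OF G QD] using \<open>2 \<le> n\<close> by linarith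
qed

lemma lap_count_ge_3_of_disjoint_non_edges:
  assumes G: "simple_graph n E"
    and ab: "a < n" "b < n" "\<not> E a b" and pq: "p < n" "q < n" "\<not> E p q"
    and dist: "distinct [a, b, p, q]"
  shows "3 \<le> lap_count n E {0..real n - 2}"
proof -
  define a' where "a' = (\<lambda>j::nat. if j = 0 then a else p)"
  define b' where "b' = (\<lambda>j::nat. if j = 0 then b else q)"
  have two: "{..<2::nat} = {0, 1}" by auto
  have "Suc 2 \<le> lap_count n E {0..real n - 2}"
  proof (rule lap_count_ge_of_matching[OF G, where a = a' and b = b'])
    show "a' j < n \<and> b' j < n \<and> \<not> E (a' j) (b' j)" if "j < 2" for j
      using ab pq unfolding a'_def b'_def by simp
    show "inj_on a' {..<2}" "inj_on b' {..<2}" "a' ` {..<2} \<inter> b' ` {..<2} = {}"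
      using dist unfolding two a'_def b'_def by auto
  qed simp
  then show ?thesis by simp
qed

section \<open>Non-edges and the independence number\<close>

lemma finite_independent_sets: "finite {S. independent_set n E S}"
proof (rule finite_subset)
  show "{S. independent_set n E S} \<subseteq> Pow {0..<n}" by (auto simp: independent_set_def)
qed simp

lemma card_independent_set_le:
  assumes "independent_set n E S"
  shows "card S \<le> independence_number n E"
  unfolding independence_number_def
  by (rule Max_ge[OF finite_imageI[OF finite_independent_sets]]) (use assms in blast)

lemma independence_number_attained:
  obtains S where "independent_set n E S" "card S = independence_number n E"
proof -
  have "card ` {S. independent_set n E S} \<noteq> {}"
    using independent_set_def[of n E "{}"] by auto
  then have "Max (card ` {S. independent_set n E S}) \<in> card ` {S. independent_set n E S}"
    using Max_in[OF finite_imageI[OF finite_independent_sets]] by blast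
  then show ?thesis using that unfolding independence_number_def by auto
qed

lemma star_of_pairwise_meeting_triangle_free:
  assumes sym: "\<And>i j. R i j \<Longrightarrow> R j i"
    and meet: "\<And>a b p q. R a b \<Longrightarrow> R p q \<Longrightarrow> a = p \<or> a = q \<or> b = p \<or> b = q"
    and triangle_free: "\<And>a b c. R a b \<Longrightarrow> R b c \<Longrightarrow> R a c \<Longrightarrow> False"
    and ab: "R a b"
  shows "\<exists>v. \<forall>i j. R i j \<longrightarrow> i = v \<or> j = v"
proof (cases "\<forall>i j. R i j \<longrightarrow> i = a \<or> j = a")
  case False
  then obtain p q where pq: "R p q" "p \<noteq> a" "q \<noteq> a" by blast
  \<comment> \<open>\<open>pq\<close> meets \<open>ab\<close> in \<open>b\<close>, giving a second edge \<open>bd\<close> at \<open>b\<close>\<close>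
  obtain d where bd: "R b d" "d \<noteq> a" using meet[OF ab pq(1)] pq sym[OF pq(1)] by blast
  have "i = b \<or> j = b" if ij: "R i j" for i j
  proof (rule ccontr)
    assume "\<not> (i = b \<or> j = b)"
    then have "a = i \<or> a = j" "d = i \<or> d = j" using meet[OF ab ij] meet[OF bd(1) ij] by auto
    then have "R a d" using ij sym[OF ij] bd(2) by auto
    then show False using triangle_free[OF ab bd(1)] by blast
  qed
  then show ?thesis by blast
qed blast

lemma non_edge_of_independence_number_ge_2:
  assumes "2 \<le> independence_number n E"
  obtains a b where "a < n" "b < n" "a \<noteq> b" "\<not> E a b"
proof -
  obtain S where S: "independent_set n E S" "card S = independence_number n E"
    using independence_number_attained .
  have "finite S" using S(1) unfolding independent_set_def using finite_subset by blast
  moreover have "\<not> card S \<le> Suc 0" using S(2) assms by simp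
  ultimately obtain a b where "a \<in> S" "b \<in> S" "a \<noteq> b" using card_le_Suc0_iff_eq by blast
  with S(1) have "a < n" "b < n" "a \<noteq> b" "\<not> E a b" unfolding independent_set_def by auto
  then show ?thesis by (rule that)
qed

lemma no_independent_triple_of_independence_number_le_2:
  assumes G: "simple_graph n E" and "independence_number n E \<le> 2"
    and "a < n" "b < n" "c < n" "a \<noteq> b" "a \<noteq> c" "b \<noteq> c"
    and "\<not> E a b" "\<not> E b c" "\<not> E a c"
  shows False
proof -
  have "\<not> E b a" "\<not> E c b" "\<not> E c a" "\<not> E a a" "\<not> E b b" "\<not> E c c"
    using G assms(3-5,9-11) unfolding simple_graph_def by blast+
  then have "independent_set n E {a, b, c}"
    using assms(3-5,9-11) unfolding independent_set_def by auto
  then have "card {a, b, c} \<le> 2" using card_independent_set_le assms(2) le_trans by blast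
  then show False using assms(6-8) by simp
qed

section \<open>Clique chains\<close>

lemma block_of_eqI:
  assumes "v < sum_list (take (Suc i) ks)" and "\<And>j. j < i \<Longrightarrow> sum_list (take (Suc j) ks) \<le> v"
  shows "block_of ks v = i"
  unfolding block_of_def
proof (rule Least_equality)
  show "\<And>j. v < sum_list (take (Suc j) ks) \<Longrightarrow> i \<le> j" using assms(2) by (meson leI not_le)
qed (use assms(1) in simp)

lemma block_of_three:
  assumes "v < 1 + p + q"
  shows "block_of [1, p, q] v = (if v = 0 then 0 else if v < 1 + p then 1 else 2)"
  using assms by (auto intro!: block_of_eqI simp: less_Suc_eq numeral_2_eq_2)

lemma clique_chain_three:
  assumes "u < 1 + p + q" "v < 1 + p + q"
  shows "clique_chain [1, p, q] u v \<longleftrightarrow>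
    u \<noteq> v \<and> \<not> (u = 0 \<and> 1 + p \<le> v) \<and> \<not> (v = 0 \<and> 1 + p \<le> u)"
  unfolding clique_chain_def block_of_three[OF assms(1)] block_of_three[OF assms(2)] by auto

lemma bij_betw_extend_interval:
  assumes g: "bij_betw g X {0..<card X}" and Y: "finite Y" and XY: "X \<inter> Y = {}"
  shows "\<exists>f. bij_betw f (X \<union> Y) {0..<card X + card Y} \<and> (\<forall>x\<in>X. f x = g x)
    \<and> (\<forall>y\<in>Y. card X \<le> f y)"
proof -
  obtain h where h: "bij_betw h Y {0..<card Y}" using ex_bij_betw_finite_nat[OF Y] by blast
  define f where "f x = (if x \<in> X then g x else card X + h x)" for x
  have "bij_betw f X {0..<card X}"
    using g by (rule bij_betw_cong[THEN iffD2, rotated]) (simp add: f_def)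
  moreover have "bij_betw ((+) (card X)) {0..<card Y} {card X..<card X + card Y}"
    by (auto simp: bij_betw_def)
  then have "bij_betw ((+) (card X) \<circ> h) Y {card X..<card X + card Y}"
    by (rule bij_betw_trans[OF h])
  then have "bij_betw f Y {card X..<card X + card Y}"
    by (rule bij_betw_cong[THEN iffD1, rotated]) (use XY in \<open>auto simp: f_def\<close>)
  ultimately have "bij_betw f (X \<union> Y) ({0..<card X} \<union> {card X..<card X + card Y})"
    by (rule bij_betw_combine) auto
  moreover have "{0..<card X} \<union> {card X..<card X + card Y} = {0..<card X + card Y}" by auto
  moreover have "\<forall>y\<in>Y. card X \<le> f y" using XY by (auto simp: f_def)
  ultimately show ?thesis unfolding f_def by auto
qed

lemma bij_betw_three_blocks:
  assumes fin: "finite B" "finite C" and disj: "v \<notin> B" "v \<notin> C" "B \<inter> C = {}"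
  shows "\<exists>f. bij_betw f ({v} \<union> B \<union> C) {0..<1 + card B + card C} \<and> f v = 0
    \<and> (\<forall>j\<in>B. f j < 1 + card B) \<and> (\<forall>j\<in>C. 1 + card B \<le> f j)"
proof -
  have "\<exists>f. bij_betw f ({v} \<union> B) {0..<card {v} + card B} \<and> (\<forall>x\<in>{v}. f x = 0)
      \<and> (\<forall>y\<in>B. card {v} \<le> f y)"
    by (rule bij_betw_extend_interval) (use fin(1) disj(1) in \<open>auto simp: bij_betw_def\<close>)
  then obtain f1 where f1: "bij_betw f1 ({v} \<union> B) {0..<card ({v} \<union> B)}" "f1 v = 0"
    using fin(1) disj(1) by auto
  moreover have "({v} \<union> B) \<inter> C = {}" using disj by auto
  ultimately obtain f where "bij_betw f ({v} \<union> B \<union> C) {0..<card ({v} \<union> B) + card C}"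
    and f_f1: "\<forall>x \<in> {v} \<union> B. f x = f1 x" and "\<forall>j \<in> C. card ({v} \<union> B) \<le> f j"
    using bij_betw_extend_interval[OF f1(1) fin(2)] by blast
  moreover have "card ({v} \<union> B) = 1 + card B" using fin disj by simp
  moreover have "\<forall>j\<in>B. f j < 1 + card B" using f_f1 bij_betwE[OF f1(1)] calculation(4) by auto
  ultimately show ?thesis using f1(2) by auto
qed

lemma star_graph_iso_clique_chain:
  assumes G: "simple_graph n E" and v: "v < n"
    and star: "\<And>i j. i < n \<Longrightarrow> j < n \<Longrightarrow> i \<noteq> j \<Longrightarrow> \<not> E i j \<Longrightarrow> i = v \<or> j = v"
  defines "C \<equiv> {j. j < n \<and> j \<noteq> v \<and> \<not> E v j}"
  shows "graph_iso n E (clique_chain [1, n - Suc (card C), card C])"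
proof -
  have sym: "\<And>i j. i < n \<Longrightarrow> j < n \<Longrightarrow> E i j \<longleftrightarrow> E j i"
    and irrefl: "\<And>i. i < n \<Longrightarrow> \<not> E i i"
    using G unfolding simple_graph_def by blast+
  define B where "B = {j. j < n \<and> j \<noteq> v \<and> E v j}"
  have fin: "finite B" "finite C" unfolding B_def C_def by auto
  have parts: "{v} \<union> B \<union> C = {0..<n}" using v unfolding B_def C_def by auto
  have "v \<notin> B" "v \<notin> C" "B \<inter> C = {}" unfolding B_def C_def by auto
  then obtain f where f: "bij_betw f ({v} \<union> B \<union> C) {0..<1 + card B + card C}" and f_v: "f v = 0"
    and f_B: "\<forall>j\<in>B. f j < 1 + card B" and f_C: "\<forall>j\<in>C. 1 + card B \<le> f j"
    using bij_betw_three_blocks[OF fin] by blast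
  have n: "n = 1 + card B + card C"
    using bij_betw_same_card[OF f] unfolding parts by simp
  have f: "bij_betw f {0..<n} {0..<n}" using f unfolding parts n[symmetric] .
  have f_inj: "\<And>i j. i < n \<Longrightarrow> j < n \<Longrightarrow> f i = f j \<longleftrightarrow> i = j"
    using f unfolding bij_betw_def inj_on_def by auto
  have f_lt: "\<And>j. j < n \<Longrightarrow> f j < 1 + card B + card C" using bij_betwE[OF f] n by auto
  have f_C_iff: "1 + card B \<le> f j \<longleftrightarrow> j \<in> C" if "j < n" for j
  proof (cases "j \<in> C")
    case False
    then have "j = v \<or> j \<in> B" using that unfolding B_def C_def by auto
    then show ?thesis using f_v f_B False by auto
  qed (use f_C in auto)
  have chain: "clique_chain [1, card B, card C] (f i) (f j) \<longleftrightarrow>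
      i \<noteq> j \<and> \<not> (i = v \<and> j \<in> C) \<and> \<not> (j = v \<and> i \<in> C)" if "i < n" "j < n" for i j
  proof -
    have "f i = 0 \<longleftrightarrow> i = v" "f j = 0 \<longleftrightarrow> j = v" using f_inj[OF _ v] f_v that by metis+
    then show ?thesis
      using clique_chain_three[OF f_lt[OF that(1)] f_lt[OF that(2)]] f_C_iff[OF that(1)]
        f_C_iff[OF that(2)] f_inj[OF that] by simp
  qed
  have adj: "E i j \<longleftrightarrow> i \<noteq> j \<and> \<not> (i = v \<and> j \<in> C) \<and> \<not> (j = v \<and> i \<in> C)"
    if "i < n" "j < n" for i j
    using that star[OF that] sym[OF that] irrefl[OF that(1)] unfolding C_def by auto
  have "n - Suc (card C) = card B" using n by simp
  then show ?thesis
    unfolding graph_iso_def using f chain adj by (intro exI[of _ f]) simp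
qed

lemma clique_chain_iso_star:
  assumes m: "2 \<le> m" "m \<le> n" and iso: "graph_iso n E (clique_chain [1, n - m, m - 1])"
  obtains v a b where "v < n"
    and "\<And>i j. i < n \<Longrightarrow> j < n \<Longrightarrow> i \<noteq> j \<Longrightarrow> \<not> E i j \<Longrightarrow> i = v \<or> j = v"
    and "a < n" "b < n" "a \<noteq> b" "\<not> E a b"
proof -
  obtain f where f: "bij_betw f {0..<n} {0..<n}"
    and f_E: "\<forall>i<n. \<forall>j<n. E i j \<longleftrightarrow> clique_chain [1, n - m, m - 1] (f i) (f j)"
    using iso unfolding graph_iso_def by blast
  have n: "n = 1 + (n - m) + (m - 1)" using m by simp
  have f_lt: "\<And>i. i < n \<Longrightarrow> f i < 1 + (n - m) + (m - 1)" using bij_betwE[OF f] n by auto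
  have f_inj: "\<And>i j. i < n \<Longrightarrow> j < n \<Longrightarrow> f i = f j \<longleftrightarrow> i = j"
    using f unfolding bij_betw_def inj_on_def by auto
  have "0 \<in> f ` {0..<n}" "n - 1 \<in> f ` {0..<n}" using bij_betw_imp_surj_on[OF f] m by auto
  then obtain v w where v: "v < n" "f v = 0" and w: "w < n" "f w = n - 1" by force
  have E_iff: "E i j \<longleftrightarrow>
      f i \<noteq> f j \<and> \<not> (f i = 0 \<and> 1 + (n - m) \<le> f j) \<and> \<not> (f j = 0 \<and> 1 + (n - m) \<le> f i)"
    if "i < n" "j < n" for i j
    using f_E that clique_chain_three[OF f_lt[OF that(1)] f_lt[OF that(2)]] by blast
  show ?thesis
  proof
    show "i = v \<or> j = v" if "i < n" "j < n" "i \<noteq> j" "\<not> E i j" for i j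
      using E_iff[OF that(1,2)] that f_inj[OF that(1,2)] f_inj[OF that(1) v(1)]
        f_inj[OF that(2) v(1)] v
      by auto
    show "v \<noteq> w" "\<not> E v w" using E_iff[OF v(1) w(1)] v w m by auto
  qed (use v w in auto)
qed

lemma graph_iso_clique_chain_of_star:
  assumes G: "simple_graph n E" and v: "v < n"
    and star: "\<And>i j. i < n \<Longrightarrow> j < n \<Longrightarrow> i \<noteq> j \<Longrightarrow> \<not> E i j \<Longrightarrow> i = v \<or> j = v"
    and ab: "a < n" "b < n" "a \<noteq> b" "\<not> E a b"
  shows "\<exists>m. 2 \<le> m \<and> m \<le> n \<and> graph_iso n E (clique_chain [1, n - m, m - 1])"
proof -
  define C where "C = {j. j < n \<and> j \<noteq> v \<and> \<not> E v j}"
  have "\<not> E b a" using G ab unfolding simple_graph_def by blast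
  then have "a \<in> C \<or> b \<in> C" using star[OF ab] ab unfolding C_def by auto
  then have "1 \<le> card C" unfolding C_def by (auto simp: Suc_le_eq card_gt_0_iff)
  moreover have "card C \<le> card ({0..<n} - {v})" unfolding C_def by (intro card_mono) auto
  moreover have "graph_iso n E (clique_chain [1, n - Suc (card C), card C])"
    using star_graph_iso_clique_chain[OF G v star] unfolding C_def .
  ultimately show ?thesis using v by (intro exI[of _ "Suc (card C)"]) simp
qed

theorem mainTheorem2:
  fixes n :: nat and E :: "nat \<Rightarrow> nat \<Rightarrow> bool"
  assumes "simple_graph n E" and "independence_number n E = 2"
  shows "lap_count n E {0..real n - 2} = 2 \<longleftrightarrow>
    (\<exists>m::nat. 2 \<le> m \<and> m \<le> n \<and> graph_iso n E (clique_chain [1, n - m, m - 1]))"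
proof
  let ?R = "\<lambda>i j. i < n \<and> j < n \<and> i \<noteq> j \<and> \<not> E i j"
  obtain a b where ab: "a < n" "b < n" "a \<noteq> b" "\<not> E a b"
    using non_edge_of_independence_number_ge_2 assms(2) by (metis order_refl)
  assume count: "lap_count n E {0..real n - 2} = 2"
  have "\<exists>v. \<forall>i j. ?R i j \<longrightarrow> i = v \<or> j = v"
  proof (rule star_of_pairwise_meeting_triangle_free)
    show "?R j i" if "?R i j" for i j
      using that assms(1) unfolding simple_graph_def by blast
    show "a = p \<or> a = q \<or> b = p \<or> b = q" if "?R a b" "?R p q" for a b p q
      using lap_count_ge_3_of_disjoint_non_edges[OF assms(1), of a b p q] that count by force
    show False if "?R a b" "?R b c" "?R a c" for a b c
      using no_independent_triple_of_independence_number_le_2[OF assms(1), of a b c] that assms(2)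
      by simp
  qed (use ab in blast)
  then obtain v where v: "v < n" and star: "\<And>i j. ?R i j \<Longrightarrow> i = v \<or> j = v"
    using ab by blast
  show "\<exists>m. 2 \<le> m \<and> m \<le> n \<and> graph_iso n E (clique_chain [1, n - m, m - 1])"
    using graph_iso_clique_chain_of_star[OF assms(1) v _ ab] star by blast
next
  assume "\<exists>m. 2 \<le> m \<and> m \<le> n \<and> graph_iso n E (clique_chain [1, n - m, m - 1])"
  then obtain m where "2 \<le> m" "m \<le> n" "graph_iso n E (clique_chain [1, n - m, m - 1])" by blast
  then show "lap_count n E {0..real n - 2} = 2"
    by (rule clique_chain_iso_star) (rule lap_count_of_star[OF assms(1)])
qed

end
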